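(* Let $p,q>0$, $x\ge0$, $0\le y\le1$. Then both $y_k=B_{p,k}(x,y)$ and $y_k=\bar B_{p,k}(x,y)$ satisfy the four-term recurrence $$d_3y_{q+3}+d_2y_{q+2}+d_1y_{q+1}+d_0y_q=0,$$ where $$d_0=-(p+q)(1-y)^2,\quad d_1=(1-y)\left((p+q)(1-y)+p+2q+2+\tfrac12xy\right),$$ $$d_2=-(1-y)\left(p+2q+2+\tfrac12xy\right)-q-2,\quad d_3=q+2 .$$
   Context: For $p,q>0$ and $0\le y\le 1$, $I_y(p,q)=\frac{1}{B(p,q)}\int_0^y t^{p-1}(1-t)^{q-1}\,dt$ is the regularized incomplete beta function, with $B(p,q)=\Gamma(p)\Gamma(q)/\Gamma(p+q)$. The cumulative noncentral beta distribution is $B_{p,q}(x,y)=e^{-x/2}\sum_{j=0}^\infty \frac{1}{j!}\left(\frac x2\right)^j I_y(p+j,q)$ for $x\ge0$, and its complement is $\bar B_{p,q}(x,y)=1-B_{p,q}(x,y)$. *)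

theory Defs
  imports "HOL-Analysis.Analysis"
begin

definition inc_beta :: "real \<Rightarrow> real \<Rightarrow> real \<Rightarrow> real" where
  "inc_beta y p q = integral {0..y} (\<lambda>t. t powr (p - 1) * (1 - t) powr (q - 1)) / Beta p q"

definition nc_beta :: "real \<Rightarrow> real \<Rightarrow> real \<Rightarrow> real \<Rightarrow> real" where
  "nc_beta p q x y = exp (- x / 2) * (\<Sum>j. (x / 2) ^ j / fact j * inc_beta y (p + real j) q)"

definition nc_beta_c :: "real \<Rightarrow> real \<Rightarrow> real \<Rightarrow> real \<Rightarrow> real" where
  "nc_beta_c p q x y = 1 - nc_beta p q x y"

end

theory Submission
  imports Defs
begin

text \<open>
  Differentiating t^a (1 - t)^b gives I_y(a, b + 1) - I_y(a, b) = y^a (1 - y)^b / (b B(a, b)),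
  so e^(x/2) (B_{p,b+1}(x, y) - B_{p,b}(x, y)) is a Poisson-weighted series of these increments.
  The increments satisfy first-order contiguous relations in both parameters; together with the
  shift j \<mapsto> j + 1 of the Poisson weights they collapse a fixed combination of three consecutive
  difference series to (1 - y) x y / 2 times the middle one. This second-order recurrence for the
  differences is the four-term recurrence; its coefficients sum to zero, so it passes to the
  complement.
\<close>

lemma Beta_real_pos: "a > 0 \<Longrightarrow> b > 0 \<Longrightarrow> Beta a b > (0::real)"
  by (simp add: Beta_def)

lemma Beta_real_succ_right:
  fixes a b :: real
  assumes "a > 0" "b > 0"
  shows "Beta a (b + 1) = b * Beta a b / (a + b)"
proof -
  have "(a + b) * Beta a (b + 1) = b * Beta a b"
    by (rule Beta_plus1_right) (use assms in \<open>auto elim: nonpos_Ints_cases\<close>)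
  then show ?thesis
    using assms by (simp add: field_simps)
qed

lemma Beta_real_succ_left:
  fixes a b :: real
  assumes "a > 0" "b > 0"
  shows "Beta (a + 1) b = a * Beta a b / (a + b)"
  using Beta_real_succ_right[OF assms(2,1)] by (simp add: Beta_commute add.commute)

lemma has_integral_beta_kernel_combination:
  fixes a b y :: real
  assumes a: "a > 0" and b: "b > 0" and y: "0 \<le> y" "y \<le> 1"
  shows "((\<lambda>t. (a + b) * (t powr (a - 1) * (1 - t) powr b)
               - b * (t powr (a - 1) * (1 - t) powr (b - 1)))
          has_integral y powr a * (1 - y) powr b) {0..y}"
proof -
  have "((\<lambda>t. (a + b) * (t powr (a - 1) * (1 - t) powr b)
               - b * (t powr (a - 1) * (1 - t) powr (b - 1)))
          has_integral y powr a * (1 - y) powr b - 0 powr a * (1 - 0) powr b) {0..y}"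
  proof (rule fundamental_theorem_of_calculus_interior)
    show "continuous_on {0..y} (\<lambda>t. t powr a * (1 - t) powr b)"
      using a b y by (intro continuous_intros continuous_on_powr') auto
  next
    fix t assume t: "t \<in> {0<..<y}"
    then have t01: "0 < t" "t < 1" using y by auto
    have "((\<lambda>t. t powr a * (1 - t) powr b) has_real_derivative
            a * t powr (a - 1) * (1 - t) powr b - b * t powr a * (1 - t) powr (b - 1)) (at t)"
      using t01 by (auto intro!: derivative_eq_intros)
    moreover have "a * t powr (a - 1) * (1 - t) powr b - b * t powr a * (1 - t) powr (b - 1)
        = (a + b) * (t powr (a - 1) * (1 - t) powr b) - b * (t powr (a - 1) * (1 - t) powr (b - 1))"
    proof -
      have ta: "t powr a = t * t powr (a - 1)" and tb: "(1 - t) powr b = (1 - t) * (1 - t) powr (b - 1)"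
        using t01 powr_add[of t "a - 1" 1] powr_add[of "1 - t" "b - 1" 1] by simp_all
      show ?thesis unfolding ta tb by (simp add: algebra_simps)
    qed
    ultimately show "((\<lambda>t. t powr a * (1 - t) powr b) has_vector_derivative
            (a + b) * (t powr (a - 1) * (1 - t) powr b)
               - b * (t powr (a - 1) * (1 - t) powr (b - 1))) (at t)"
      by (simp add: has_real_derivative_iff_has_vector_derivative)
  qed (use y in auto)
  then show ?thesis using a by simp
qed

definition inc_beta_increment :: "real \<Rightarrow> real \<Rightarrow> real \<Rightarrow> real" where
  "inc_beta_increment y a b = y powr a * (1 - y) powr b / (b * Beta a b)"

lemma inc_beta_succ_right:
  fixes a b y :: real
  assumes a: "a > 0" and b: "b > 0" and y: "0 \<le> y" "y \<le> 1"
  shows "inc_beta y a (b + 1) = inc_beta y a b + inc_beta_increment y a b"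
proof -
  define K where "K c = integral {0..y} (\<lambda>t. t powr (a - 1) * (1 - t) powr (c - 1))" for c
  have int: "(\<lambda>t. t powr (a - 1) * (1 - t) powr (c - 1)) integrable_on {0..y}" if "c > 0" for c
    by (rule integrable_on_subinterval[OF integrable_Beta']) (use a that y in auto)
  have "((\<lambda>t. (a + b) * (t powr (a - 1) * (1 - t) powr b)
               - b * (t powr (a - 1) * (1 - t) powr (b - 1)))
          has_integral (a + b) * K (b + 1) - b * K b) {0..y}"
    using int[of "b + 1"] int[of b] b unfolding K_def
    by (intro has_integral_diff has_integral_mult_right integrable_integral) auto
  then have "(a + b) * K (b + 1) - b * K b = y powr a * (1 - y) powr b"
    using has_integral_beta_kernel_combination[OF a b y] by (rule has_integral_unique)
  then have K: "K (b + 1) = (b * K b + y powr a * (1 - y) powr b) / (a + b)"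
    using a b by (simp add: field_simps)
  have "Beta a b > 0"
    using a b by (rule Beta_real_pos)
  then show ?thesis
    using a b unfolding inc_beta_def inc_beta_increment_def K_def[symmetric] K Beta_real_succ_right[OF a b]
    by (simp add: divide_simps)
qed

lemma inc_beta_increment_succ_right:
  fixes a b y :: real
  assumes a: "a > 0" and b: "b > 0" and y: "y \<le> 1"
  shows "(b + 1) * inc_beta_increment y a (b + 1) = (a + b) * (1 - y) * inc_beta_increment y a b"
proof -
  have "Beta a b > 0"
    using a b by (rule Beta_real_pos)
  then show ?thesis
    using a b y unfolding inc_beta_increment_def Beta_real_succ_right[OF a b] powr_add
    by (simp add: divide_simps)
qed

lemma inc_beta_increment_succ_left:
  fixes a b y :: real
  assumes a: "a > 0" and b: "b > 0" and y: "y \<ge> 0"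
  shows "a * inc_beta_increment y (a + 1) b = (a + b) * y * inc_beta_increment y a b"
proof -
  have "Beta a b > 0"
    using a b by (rule Beta_real_pos)
  then show ?thesis
    using a b y unfolding inc_beta_increment_def Beta_real_succ_left[OF a b] powr_add
    by (simp add: divide_simps)
qed

lemma inc_beta_increment_three_term:
  fixes a b c y :: real
  assumes a: "a > 0" and b: "b > 0" and y: "y \<le> 1"
  shows "(b + 2) * inc_beta_increment y a (b + 2)
           - (1 - y) * (c + 2 * b + 2) * inc_beta_increment y a (b + 1)
           + (c + b) * (1 - y)^2 * inc_beta_increment y a b
         = (1 - y) * (a - c) * (a - 1) / (a + b) * inc_beta_increment y a (b + 1)"
proof -
  define I0 I1 where "I0 = inc_beta_increment y a b" and "I1 = inc_beta_increment y a (b + 1)"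
  have h0: "(1 - y) * I0 = (b + 1) / (a + b) * I1"
    using inc_beta_increment_succ_right[OF a b y] a b unfolding I0_def I1_def by (simp add: field_simps)
  have h2: "(b + 2) * inc_beta_increment y a (b + 2) = (a + b + 1) * (1 - y) * I1"
    using inc_beta_increment_succ_right[of a "b + 1" y] a b y unfolding I1_def
    by (simp add: add.assoc algebra_simps)
  have "(b + 2) * inc_beta_increment y a (b + 2) - (1 - y) * (c + 2 * b + 2) * I1
          + (c + b) * (1 - y)^2 * I0
        = (a + b + 1) * (1 - y) * I1 - (1 - y) * (c + 2 * b + 2) * I1
          + (c + b) * (1 - y) * ((1 - y) * I0)"
    unfolding h2 by (simp add: power2_eq_square)
  also have "\<dots> = (1 - y) * ((a + b + 1) - (c + 2 * b + 2) + (c + b) * (b + 1) / (a + b)) * I1"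
    unfolding h0 using a b by (simp add: field_simps)
  also have "(a + b + 1) - (c + 2 * b + 2) + (c + b) * (b + 1) / (a + b) = (a - c) * (a - 1) / (a + b)"
    using a b by (simp add: field_simps)
  finally show ?thesis
    unfolding I0_def I1_def by (simp add: algebra_simps)
qed

lemma inc_beta_bounds:
  fixes a b y :: real
  assumes a: "a > 0" and b: "b > 0" and y: "0 \<le> y" "y \<le> 1"
  shows "0 \<le> inc_beta y a b" "inc_beta y a b \<le> 1"
proof -
  define f where "f t = t powr (a - 1) * (1 - t) powr (b - 1)" for t :: real
  have f01: "(f has_integral Beta a b) {0..1}"
    unfolding f_def using a b by (rule has_integral_Beta_real)
  have f0y: "f integrable_on {0..y}"
    by (rule integrable_on_subinterval[OF has_integral_integrable[OF f01]]) (use y in auto)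
  have f_nonneg: "\<And>t. 0 \<le> f t"
    unfolding f_def by simp
  have "integral {0..y} f \<le> integral {0..1} f"
    by (rule integral_subset_le) (use y f0y f01 f_nonneg in auto)
  also have "integral {0..1} f = Beta a b"
    using f01 by (rule integral_unique)
  finally have "integral {0..y} f \<le> Beta a b" .
  moreover have "0 \<le> integral {0..y} f"
    by (rule integral_nonneg) (use f0y f_nonneg in auto)
  moreover have "Beta a b > 0"
    using a b by (rule Beta_real_pos)
  ultimately show "0 \<le> inc_beta y a b" "inc_beta y a b \<le> 1"
    unfolding inc_beta_def f_def[symmetric] by simp_all
qed

lemma summable_nc_beta_series:
  fixes p b x y :: real
  assumes p: "p > 0" and b: "b > 0" and y: "0 \<le> y" "y \<le> 1"
  shows "summable (\<lambda>j. (x / 2) ^ j / fact j * inc_beta y (p + real j) b)"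
proof (rule summable_comparison_test'[OF summable_norm_exp[of "x / 2"]])
  fix j :: nat
  have "0 \<le> inc_beta y (p + real j) b" "inc_beta y (p + real j) b \<le> 1"
    using p b y by (intro inc_beta_bounds; simp)+
  then have "norm ((x / 2) ^ j /\<^sub>R fact j) * \<bar>inc_beta y (p + real j) b\<bar>
              \<le> norm ((x / 2) ^ j /\<^sub>R fact j)"
    by (intro mult_left_le) simp_all
  then show "norm ((x / 2) ^ j / fact j * inc_beta y (p + real j) b)
              \<le> norm ((x / 2) ^ j /\<^sub>R fact j)"
    by (simp add: abs_mult field_simps)
qed

definition nc_beta_increment_term :: "real \<Rightarrow> real \<Rightarrow> real \<Rightarrow> real \<Rightarrow> nat \<Rightarrow> real" where
  "nc_beta_increment_term p b x y j = (x / 2) ^ j / fact j * inc_beta_increment y (p + real j) b"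

lemma nc_beta_succ_right:
  fixes p b x y :: real
  assumes p: "p > 0" and b: "b > 0" and y: "0 \<le> y" "y \<le> 1"
  shows "nc_beta_increment_term p b x y sums (exp (x / 2) * (nc_beta p (b + 1) x y - nc_beta p b x y))"
proof -
  define u where "u c j = (x / 2) ^ j / fact j * inc_beta y (p + real j) c" for c j
  have increments: "u (b + 1) j - u b j = nc_beta_increment_term p b x y j" for j
    unfolding u_def nc_beta_increment_term_def using inc_beta_succ_right[of "p + real j" b y] p b y
    by (simp add: algebra_simps)
  have "exp (x / 2) * (nc_beta p (b + 1) x y - nc_beta p b x y)
      = exp (x / 2) * exp (- x / 2) * (suminf (u (b + 1)) - suminf (u b))"
    unfolding nc_beta_def u_def by (simp add: right_diff_distrib)
  also have "\<dots> = suminf (u (b + 1)) - suminf (u b)"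
    by (simp flip: exp_add)
  finally have scaled_difference: "exp (x / 2) * (nc_beta p (b + 1) x y - nc_beta p b x y)
      = suminf (u (b + 1)) - suminf (u b)" .
  have "(\<lambda>j. u (b + 1) j - u b j) sums (suminf (u (b + 1)) - suminf (u b))"
    unfolding u_def using p b y by (intro sums_diff summable_sums summable_nc_beta_series) auto
  then show ?thesis
    unfolding increments scaled_difference by (simp add: fun_eq_iff)
qed

lemma nc_beta_increment_term_three_term:
  fixes p q x y :: real
  assumes p: "p > 0" and q: "q > 0" and y: "0 \<le> y" "y \<le> 1"
  defines "A \<equiv> \<lambda>j. (q + 2) * nc_beta_increment_term p (q + 2) x y j
                   - (1 - y) * (p + 2 * q + 2) * nc_beta_increment_term p (q + 1) x y j
                   + (p + q) * (1 - y)^2 * nc_beta_increment_term p q x y j"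
  shows "A 0 = 0" and "A (Suc k) = (1 - y) * (x * y / 2) * nc_beta_increment_term p (q + 1) x y k"
proof -
  have A_eq: "A j = (x / 2) ^ j / fact j * ((1 - y) * real j * (p + real j - 1) / (p + real j + q)
                  * inc_beta_increment y (p + real j) (q + 1))" for j
  proof -
    define w where "w = (x / 2) ^ j / fact j"
    have "A j = w * ((q + 2) * inc_beta_increment y (p + real j) (q + 2)
                     - (1 - y) * (p + 2 * q + 2) * inc_beta_increment y (p + real j) (q + 1)
                     + (p + q) * (1 - y)^2 * inc_beta_increment y (p + real j) q)"
      unfolding A_def nc_beta_increment_term_def w_def[symmetric] by (simp add: algebra_simps)
    also have "\<dots> = w * ((1 - y) * (p + real j - p) * (p + real j - 1) / (p + real j + q)
                  * inc_beta_increment y (p + real j) (q + 1))"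
      using inc_beta_increment_three_term[of "p + real j" q y p] p q y by simp
    finally show ?thesis
      unfolding w_def by simp
  qed
  show "A 0 = 0"
    unfolding A_eq by simp
  define a where "a = p + real k"
  define w where "w = (x / 2) ^ k / fact k"
  define I0 I1 where "I0 = inc_beta_increment y a (q + 1)" and "I1 = inc_beta_increment y (a + 1) (q + 1)"
  have pos: "a > 0" "a + q + 1 > 0"
    using p q unfolding a_def by simp_all
  have shift: "a * I1 = (a + q + 1) * y * I0"
    using inc_beta_increment_succ_left[of a "q + 1" y] pos q y unfolding I0_def I1_def
    by (simp add: algebra_simps)
  have weight: "(x / 2) ^ Suc k / fact (Suc k) * real (Suc k) = x / 2 * w"
    unfolding w_def fact_Suc power_Suc by (simp del: of_nat_Suc)
  have "A (Suc k) = (x / 2) ^ Suc k / fact (Suc k) * ((1 - y) * real (Suc k) * a / (a + q + 1) * I1)"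
    unfolding A_eq a_def I1_def by (simp add: algebra_simps)
  also have "\<dots> = ((x / 2) ^ Suc k / fact (Suc k) * real (Suc k)) * (1 - y) * (a * I1) / (a + q + 1)"
    using pos by (simp add: field_simps)
  also have "\<dots> = (1 - y) * (x * y / 2) * (w * I0)"
    unfolding weight shift using pos by (simp add: field_simps)
  finally show "A (Suc k) = (1 - y) * (x * y / 2) * nc_beta_increment_term p (q + 1) x y k"
    unfolding nc_beta_increment_term_def w_def I0_def a_def .
qed

lemma nc_beta_difference_recurrence:
  fixes p q x y :: real
  assumes p: "p > 0" and q: "q > 0" and y: "0 \<le> y" "y \<le> 1"
  shows "(q + 2) * (nc_beta p (q + 3) x y - nc_beta p (q + 2) x y)
           - (1 - y) * (p + 2 * q + 2 + x * y / 2) * (nc_beta p (q + 2) x y - nc_beta p (q + 1) x y)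
           + (p + q) * (1 - y)^2 * (nc_beta p (q + 1) x y - nc_beta p q x y) = 0"
proof -
  define T where "T b = nc_beta_increment_term p b x y" for b
  define D where "D b = nc_beta p (b + 1) x y - nc_beta p b x y" for b
  have T_sums: "T b sums (exp (x / 2) * D b)" if "b > 0" for b
    unfolding T_def D_def using nc_beta_succ_right[of p b y x] p that y by simp
  define A where "A j = (q + 2) * T (q + 2) j - (1 - y) * (p + 2 * q + 2) * T (q + 1) j
                        + (p + q) * (1 - y)^2 * T q j" for j
  have "A sums (exp (x / 2) * ((q + 2) * D (q + 2) - (1 - y) * (p + 2 * q + 2) * D (q + 1)
                               + (p + q) * (1 - y)^2 * D q))"
  proof -
    have "A sums ((q + 2) * (exp (x / 2) * D (q + 2))
                  - (1 - y) * (p + 2 * q + 2) * (exp (x / 2) * D (q + 1))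
                  + (p + q) * (1 - y)^2 * (exp (x / 2) * D q))"
      unfolding A_def using q by (intro sums_add sums_diff sums_mult T_sums) auto
    then show ?thesis
      by (simp add: algebra_simps)
  qed
  moreover have "A sums (exp (x / 2) * ((1 - y) * (x * y / 2) * D (q + 1)))"
  proof -
    have A_0: "A 0 = 0"
      unfolding A_def T_def by (rule nc_beta_increment_term_three_term(1)[OF p q y])
    have A_Suc: "A (Suc k) = (1 - y) * (x * y / 2) * T (q + 1) k" for k
      unfolding A_def T_def by (rule nc_beta_increment_term_three_term(2)[OF p q y])
    have "(\<lambda>k. A (Suc k)) sums ((1 - y) * (x * y / 2) * (exp (x / 2) * D (q + 1)))"
      unfolding A_Suc using q by (intro sums_mult T_sums) simp
    then show ?thesis
      using A_0 by (simp add: sums_Suc_iff algebra_simps)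
  qed
  ultimately have "(q + 2) * D (q + 2) - (1 - y) * (p + 2 * q + 2) * D (q + 1) + (p + q) * (1 - y)^2 * D q
                   = (1 - y) * (x * y / 2) * D (q + 1)"
    by (auto dest: sums_unique2)
  moreover have "D (q + 2) = nc_beta p (q + 3) x y - nc_beta p (q + 2) x y"
    and "D (q + 1) = nc_beta p (q + 2) x y - nc_beta p (q + 1) x y"
    unfolding D_def by (simp_all add: add.assoc)
  ultimately show ?thesis
    unfolding D_def[of q] by (simp add: ring_distribs)
qed

theorem mainTheorem8:
  fixes p q x y :: real
  assumes "p > 0" and "q > 0" and "x \<ge> 0" and "0 \<le> y" and "y \<le> 1"
  defines "d0 \<equiv> - (p + q) * (1 - y)^2"
      and "d1 \<equiv> (1 - y) * ((p + q) * (1 - y) + p + 2 * q + 2 + x * y / 2)"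
      and "d2 \<equiv> - (1 - y) * (p + 2 * q + 2 + x * y / 2) - q - 2"
      and "d3 \<equiv> q + 2"
  shows "d3 * nc_beta p (q + 3) x y + d2 * nc_beta p (q + 2) x y
           + d1 * nc_beta p (q + 1) x y + d0 * nc_beta p q x y = 0
         \<and> d3 * nc_beta_c p (q + 3) x y + d2 * nc_beta_c p (q + 2) x y
           + d1 * nc_beta_c p (q + 1) x y + d0 * nc_beta_c p q x y = 0"
proof -
  have nc: "d3 * nc_beta p (q + 3) x y + d2 * nc_beta p (q + 2) x y
              + d1 * nc_beta p (q + 1) x y + d0 * nc_beta p q x y = 0"
  proof -
    have "d3 * nc_beta p (q + 3) x y + d2 * nc_beta p (q + 2) x y
            + d1 * nc_beta p (q + 1) x y + d0 * nc_beta p q x y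
          = (q + 2) * (nc_beta p (q + 3) x y - nc_beta p (q + 2) x y)
            - (1 - y) * (p + 2 * q + 2 + x * y / 2) * (nc_beta p (q + 2) x y - nc_beta p (q + 1) x y)
            + (p + q) * (1 - y)^2 * (nc_beta p (q + 1) x y - nc_beta p q x y)"
      unfolding d0_def d1_def d2_def d3_def by (simp add: field_simps power2_eq_square)
    also have "\<dots> = 0"
      using assms(1,2,4,5) by (rule nc_beta_difference_recurrence)
    finally show ?thesis .
  qed
  have "d0 + d1 + d2 + d3 = 0"
    unfolding d0_def d1_def d2_def d3_def by (simp add: field_simps power2_eq_square)
  then have "d3 * nc_beta_c p (q + 3) x y + d2 * nc_beta_c p (q + 2) x y
              + d1 * nc_beta_c p (q + 1) x y + d0 * nc_beta_c p q x y = 0"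
    using nc unfolding nc_beta_c_def by (simp add: algebra_simps)
  with nc show ?thesis
    by blast
qed

end
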